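(* Let $P$ be a bounded poset of finite length and $I\subset P$ a proper ideal. Then the geometric realizations $\|\Delta(\overline{\mathrm{Bier}(P,I)})\|$ and $\|\Delta(\overline P)\|$ are PL homeomorphic.
   Context: $\overline Q:=Q\setminus\{\hat0,\hat1\}$ denotes the proper part of a bounded poset $Q$ and $\Delta(\overline Q)$ its order complex (complex of chains). A proper ideal $I$ of $P$ is a nonempty down-closed subset different from $P$. The Bier poset $\mathrm{Bier}(P,I)$ consists of all intervals $[x,y]$ of $P$ with $x\in I$, $y\notin I$, ordered by reversed inclusion ($[x',y']\le[x,y]$ iff $x'\le x<y\le y'$), together with an additional top element $\hat1$. *)

theory Defs
  imports Complex_Main
begin

definition poset_on :: "'a set \<Rightarrow> ('a \<Rightarrow> 'a \<Rightarrow> bool) \<Rightarrow> bool" where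
  "poset_on P le \<longleftrightarrow>
     (\<forall>x\<in>P. le x x) \<and>
     (\<forall>x\<in>P. \<forall>y\<in>P. le x y \<and> le y x \<longrightarrow> x = y) \<and>
     (\<forall>x\<in>P. \<forall>y\<in>P. \<forall>z\<in>P. le x y \<and> le y z \<longrightarrow> le x z)"

definition bounded_poset :: "'a set \<Rightarrow> ('a \<Rightarrow> 'a \<Rightarrow> bool) \<Rightarrow> bool" where
  "bounded_poset P le \<longleftrightarrow> poset_on P le \<and>
     (\<exists>b\<in>P. \<forall>x\<in>P. le b x) \<and> (\<exists>t\<in>P. \<forall>x\<in>P. le x t)"

definition is_chain :: "'a set \<Rightarrow> ('a \<Rightarrow> 'a \<Rightarrow> bool) \<Rightarrow> bool" where
  "is_chain C le \<longleftrightarrow> (\<forall>x\<in>C. \<forall>y\<in>C. le x y \<or> le y x)"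

definition finite_length :: "'a set \<Rightarrow> ('a \<Rightarrow> 'a \<Rightarrow> bool) \<Rightarrow> bool" where
  "finite_length P le \<longleftrightarrow>
     (\<exists>n::nat. \<forall>C. C \<subseteq> P \<and> is_chain C le \<longrightarrow> finite C \<and> card C \<le> n)"

definition proper_ideal :: "'a set \<Rightarrow> ('a \<Rightarrow> 'a \<Rightarrow> bool) \<Rightarrow> 'a set \<Rightarrow> bool" where
  "proper_ideal P le I \<longleftrightarrow> I \<subseteq> P \<and> I \<noteq> {} \<and> I \<noteq> P \<and>
     (\<forall>x\<in>I. \<forall>y\<in>P. le y x \<longrightarrow> y \<in> I)"

definition proper_part :: "'a set \<Rightarrow> ('a \<Rightarrow> 'a \<Rightarrow> bool) \<Rightarrow> 'a set" where
  "proper_part Q le = {x\<in>Q. \<not> (\<forall>y\<in>Q. le x y) \<and> \<not> (\<forall>y\<in>Q. le y x)}"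

definition order_complex :: "'a set \<Rightarrow> ('a \<Rightarrow> 'a \<Rightarrow> bool) \<Rightarrow> 'a set set" where
  "order_complex S le = {c. c \<noteq> {} \<and> finite c \<and> c \<subseteq> S \<and> is_chain c le}"

text \<open>Elements: Some (x,y) stands for the interval [x,y]; None is the added top.\<close>
definition bier_carrier :: "'a set \<Rightarrow> ('a \<Rightarrow> 'a \<Rightarrow> bool) \<Rightarrow> 'a set \<Rightarrow> ('a \<times> 'a) option set" where
  "bier_carrier P le I =
     insert None (Some ` {(x, y). x \<in> I \<and> y \<in> P \<and> y \<notin> I \<and> le x y})"

fun bier_le :: "('a \<Rightarrow> 'a \<Rightarrow> bool) \<Rightarrow> ('a \<times> 'a) option \<Rightarrow> ('a \<times> 'a) option \<Rightarrow> bool" where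
  "bier_le le _ None = True"
| "bier_le le None (Some _) = False"
| "bier_le le (Some (x', y')) (Some (x, y)) = (le x' x \<and> le y y')"

definition simplicial_complex :: "'v set set \<Rightarrow> bool" where
  "simplicial_complex K \<longleftrightarrow> (\<forall>\<sigma>\<in>K. finite \<sigma> \<and> \<sigma> \<noteq> {}) \<and>
     (\<forall>\<sigma>\<in>K. \<forall>\<tau>. \<tau> \<subseteq> \<sigma> \<and> \<tau> \<noteq> {} \<longrightarrow> \<tau> \<in> K)"

text \<open>Geometric simplex of a face, as barycentric coordinate functions.\<close>
definition face_simplex :: "'v set \<Rightarrow> ('v \<Rightarrow> real) set" where
  "face_simplex \<sigma> = {f. (\<forall>v. 0 \<le> f v) \<and> (\<forall>v. v \<notin> \<sigma> \<longrightarrow> f v = 0) \<and> sum f \<sigma> = 1}"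

definition realization :: "'v set set \<Rightarrow> ('v \<Rightarrow> real) set" where
  "realization K = (\<Union>\<sigma>\<in>K. face_simplex \<sigma>)"

text \<open>For a complex whose vertices are points (coordinate functions), the affine
  map sending a barycentric combination of vertices to the corresponding point.\<close>
definition lin_ext :: "(('v \<Rightarrow> real) \<Rightarrow> real) \<Rightarrow> ('v \<Rightarrow> real)" where
  "lin_ext f = (\<lambda>v. \<Sum>p\<in>{p. f p \<noteq> 0}. f p * p v)"

definition subdivision :: "('v \<Rightarrow> real) set set \<Rightarrow> 'v set set \<Rightarrow> bool" where
  "subdivision K' K \<longleftrightarrow> simplicial_complex K' \<and>
     \<Union>K' \<subseteq> realization K \<and>
     inj_on lin_ext (realization K') \<and>
     (\<forall>\<tau>\<in>K'. \<exists>\<sigma>\<in>K. lin_ext ` face_simplex \<tau> \<subseteq> face_simplex \<sigma>) \<and>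
     (\<forall>\<sigma>\<in>K. \<exists>F. finite F \<and> F \<subseteq> K' \<and> face_simplex \<sigma> = (\<Union>\<tau>\<in>F. lin_ext ` face_simplex \<tau>))"

definition simplicial_iso :: "'v set set \<Rightarrow> 'w set set \<Rightarrow> bool" where
  "simplicial_iso K L \<longleftrightarrow> (\<exists>\<phi>. bij_betw \<phi> (\<Union>K) (\<Union>L) \<and>
     (\<forall>\<tau>. \<tau> \<subseteq> \<Union>K \<longrightarrow> (\<tau> \<in> K \<longleftrightarrow> \<phi> ` \<tau> \<in> L)))"

definition PL_homeomorphic :: "'v set set \<Rightarrow> 'w set set \<Rightarrow> bool" where
  "PL_homeomorphic K L \<longleftrightarrow>
     (\<exists>K' L'. subdivision K' K \<and> subdivision L' L \<and> simplicial_iso K' L')"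

end

theory Submission
  imports Defs
begin

(* The vertex [x,y] of the proper part of Bier(P,I) is placed at the barycentre of
   {x,y} - {hat0, hat1}, a face of the order complex of the proper part of P.  Since a Bier chain
   [x_1,y_1] < ... < [x_k,y_k] satisfies x_1 <= ... <= x_k <= y_k <= ... <= y_1, its simplex is
   mapped affinely into a simplex of that complex.  Every point p of that complex is a positive
   combination of the points of exactly one Bier chain: the top of the chain must be [a,b], where a
   is the largest element of the support of p in I (or hat0) and b the least one outside I (or hat1).
   Subtracting the largest multiple of the point of [a,b] that keeps p nonnegative and recursing
   gives existence; peeling off the common top of two representations gives uniqueness.  So the
   Bier complex subdivides the order complex of the proper part of P, and as it also subdivides
   itself, the two are PL homeomorphic. *)

section \<open>Subdivisions given by vertex maps\<close>

lemma simplicial_complex_order_complex: "simplicial_complex (order_complex S R)"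
  unfolding simplicial_complex_def order_complex_def is_chain_def
  by (blast intro: finite_subset)

lemma simplicial_complex_finite: "simplicial_complex K \<Longrightarrow> \<sigma> \<in> K \<Longrightarrow> finite \<sigma>"
  by (simp add: simplicial_complex_def)

lemma simplicial_complex_subface:
  "simplicial_complex K \<Longrightarrow> \<sigma> \<in> K \<Longrightarrow> \<tau> \<subseteq> \<sigma> \<Longrightarrow> \<tau> \<noteq> {} \<Longrightarrow> \<tau> \<in> K"
  unfolding simplicial_complex_def by blast

lemma simplicial_complex_image:
  assumes "simplicial_complex K"
  shows "simplicial_complex ((`) f ` K)"
  unfolding simplicial_complex_def
proof (rule conjI; intro ballI allI impI)
  fix s assume "s \<in> (`) f ` K"
  then show "finite s \<and> s \<noteq> {}" using assms by (auto simp: simplicial_complex_def)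
next
  fix s \<tau> assume "s \<in> (`) f ` K" and \<tau>: "\<tau> \<subseteq> s \<and> \<tau> \<noteq> {}"
  then obtain \<sigma> where \<sigma>: "\<sigma> \<in> K" "s = f ` \<sigma>" by auto
  define \<rho> where "\<rho> = {v\<in>\<sigma>. f v \<in> \<tau>}"
  have "f ` \<rho> = \<tau>" using \<sigma>(2) \<tau> by (auto simp: \<rho>_def)
  moreover have "\<rho> \<in> K"
    using \<sigma> \<tau> by (intro simplicial_complex_subface[OF assms \<sigma>(1)]) (auto simp: \<rho>_def)
  ultimately show "\<tau> \<in> (`) f ` K" by blast
qed

lemma image_mem_image_iff:
  assumes "inj_on f (\<Union>K)" "A \<subseteq> \<Union>K"
  shows "f ` A \<in> (`) f ` K \<longleftrightarrow> A \<in> K"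
proof
  assume "f ` A \<in> (`) f ` K"
  then obtain B where "B \<in> K" "f ` A = f ` B" by auto
  moreover have "B \<subseteq> \<Union>K" using \<open>B \<in> K\<close> by blast
  ultimately show "A \<in> K" using inj_on_image_eq_iff[OF assms] by metis
qed auto

lemma simplicial_iso_image_image:
  assumes f: "inj_on f (\<Union>K)" and h: "inj_on h (\<Union>K)"
  shows "simplicial_iso ((`) f ` K) ((`) h ` K)"
  unfolding simplicial_iso_def
proof (intro exI conjI allI impI)
  let ?\<phi> = "h \<circ> the_inv_into (\<Union>K) f"
  show "bij_betw ?\<phi> (\<Union>((`) f ` K)) (\<Union>((`) h ` K))"
    using bij_betw_trans[OF bij_betw_the_inv_into[OF inj_on_imp_bij_betw[OF f]] inj_on_imp_bij_betw[OF h]]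
    by (simp add: image_Union)
  fix \<tau> assume "\<tau> \<subseteq> \<Union>((`) f ` K)"
  then have "\<tau> \<subseteq> f ` \<Union>K" by (simp add: image_Union)
  then obtain A where A: "A \<subseteq> \<Union>K" "\<tau> = f ` A" by (rule subset_imageE)
  have "the_inv_into (\<Union>K) f ` f ` A = A"
    unfolding image_image using A(1) the_inv_into_f_f[OF f] by (simp add: subset_iff)
  then have "?\<phi> ` \<tau> = h ` A" by (simp only: A(2) image_comp[symmetric])
  then show "\<tau> \<in> (`) f ` K \<longleftrightarrow> ?\<phi> ` \<tau> \<in> (`) h ` K"
    using A image_mem_image_iff[OF f] image_mem_image_iff[OF h] by simp
qed

definition barycentre :: "'v set \<Rightarrow> 'v \<Rightarrow> real" where
  "barycentre A = (\<lambda>z. if z \<in> A then 1 / real (card A) else 0)"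

lemma barycentre_nonneg: "0 \<le> barycentre A z"
  by (simp add: barycentre_def)

lemma barycentre_nonzero_iff: "finite A \<Longrightarrow> barycentre A z \<noteq> 0 \<longleftrightarrow> z \<in> A"
  by (auto simp: barycentre_def card_gt_0_iff)

lemma inj_on_barycentre: "inj_on barycentre {A. finite A}"
proof (rule inj_onI)
  fix A B :: "'v set"
  assume "A \<in> {A. finite A}" "B \<in> {A. finite A}" "barycentre A = barycentre B"
  then show "A = B" using barycentre_nonzero_iff by (metis mem_Collect_eq set_eqI)
qed

lemma barycentre_in_face_simplex_iff:
  assumes "finite A" "A \<noteq> {}" "finite \<sigma>"
  shows "barycentre A \<in> face_simplex \<sigma> \<longleftrightarrow> A \<subseteq> \<sigma>"
proof
  assume "barycentre A \<in> face_simplex \<sigma>"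
  then show "A \<subseteq> \<sigma>" using barycentre_nonzero_iff[OF assms(1)] by (auto simp: face_simplex_def)
next
  assume "A \<subseteq> \<sigma>"
  then have "sum (barycentre A) \<sigma> = sum (barycentre A) A"
    using assms(3) by (intro sum.mono_neutral_right) (auto simp: barycentre_def)
  also have "\<dots> = 1" using assms(1,2) by (simp add: barycentre_def)
  finally show "barycentre A \<in> face_simplex \<sigma>"
    using \<open>A \<subseteq> \<sigma>\<close> by (auto simp: face_simplex_def barycentre_def)
qed

lemma max_barycentre_multiple_below:
  assumes "finite E" "E \<noteq> {}" "\<forall>z\<in>E. 0 < p z"
  obtains w where "0 < w" "\<And>z. 0 \<le> p z \<Longrightarrow> 0 \<le> p z - w * barycentre E z"
    "\<exists>z\<in>E. p z = w * barycentre E z"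
proof
  let ?\<mu> = "Min (p ` E)"
  have \<mu>: "0 < ?\<mu>" "\<forall>z\<in>E. ?\<mu> \<le> p z" "?\<mu> \<in> p ` E" using assms by auto
  have scaled: "real (card E) * ?\<mu> * barycentre E z = (if z \<in> E then ?\<mu> else 0)" for z
    using assms(1,2) by (simp add: barycentre_def)
  show "0 < real (card E) * ?\<mu>" using \<mu>(1) assms(1,2) by (simp add: card_gt_0_iff)
  show "0 \<le> p z - real (card E) * ?\<mu> * barycentre E z" if "0 \<le> p z" for z
    using scaled[of z] \<mu>(2) that by auto
  show "\<exists>z\<in>E. p z = real (card E) * ?\<mu> * barycentre E z" using \<mu>(3) scaled by auto
qed

definition bary :: "('v \<Rightarrow> 'w \<Rightarrow> real) \<Rightarrow> 'v set \<Rightarrow> ('v \<Rightarrow> real) \<Rightarrow> 'w \<Rightarrow> real" where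
  "bary g C m = (\<lambda>z. \<Sum>v\<in>C. m v * g v z)"

lemma bary_cong: "(\<And>v. v \<in> C \<Longrightarrow> m v = m' v) \<Longrightarrow> bary g C m = bary g C m'"
  by (simp add: bary_def)

lemma bary_empty [simp]: "bary g {} m = (\<lambda>z. 0)"
  by (simp add: bary_def)

lemma bary_insert:
  assumes "finite C" "t \<notin> C"
  shows "bary g (insert t C) (m(t := w)) z = w * g t z + bary g C m z"
proof -
  have "(\<Sum>v\<in>C. (m(t := w)) v * g v z) = (\<Sum>v\<in>C. m v * g v z)"
    using assms(2) by (intro sum.cong) auto
  then show ?thesis using assms by (simp add: bary_def)
qed

lemma bary_subtract_vertex:
  assumes "finite C" "t \<in> C"
  shows "bary g C m z = w * g t z + bary g (if m t = w then C - {t} else C) (m(t := m t - w)) z"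
proof -
  have rest: "(\<Sum>v\<in>C - {t}. (m(t := m t - w)) v * g v z) = (\<Sum>v\<in>C - {t}. m v * g v z)"
    by (intro sum.cong) auto
  show ?thesis
    using rest sum.remove[OF assms, of "\<lambda>v. m v * g v z"]
      sum.remove[OF assms, of "\<lambda>v. (m(t := m t - w)) v * g v z"]
    by (simp add: bary_def algebra_simps)
qed

lemma bary_nonzero_iff:
  assumes "finite C" "\<forall>v\<in>C. 0 < m v" "\<And>v z. 0 \<le> g v z"
  shows "bary g C m z \<noteq> 0 \<longleftrightarrow> (\<exists>v\<in>C. g v z \<noteq> 0)"
  using assms by (auto simp: bary_def sum_nonneg_eq_0_iff less_imp_le; force)

lemma sum_bary:
  assumes "finite \<sigma>" "finite C" "g ` C \<subseteq> face_simplex \<sigma>"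
  shows "sum (bary g C m) \<sigma> = sum m C"
proof -
  have "sum (bary g C m) \<sigma> = (\<Sum>v\<in>C. m v * sum (g v) \<sigma>)"
    unfolding bary_def by (simp add: sum.swap[of _ \<sigma>] sum_distrib_left)
  also have "\<dots> = sum m C"
    using assms(3) by (intro sum.cong) (auto simp: face_simplex_def)
  finally show ?thesis .
qed

lemma bary_in_face_simplex:
  assumes "finite \<sigma>" "finite C" "g ` C \<subseteq> face_simplex \<sigma>" "\<forall>v\<in>C. 0 \<le> m v" "sum m C = 1"
  shows "bary g C m \<in> face_simplex \<sigma>"
proof -
  have "\<forall>z. 0 \<le> bary g C m z"
    using assms(3,4) by (auto simp: bary_def face_simplex_def intro!: sum_nonneg)
  moreover have "\<forall>z. z \<notin> \<sigma> \<longrightarrow> bary g C m z = 0"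
    using assms(3) by (auto simp: bary_def face_simplex_def intro!: sum.neutral)
  ultimately show ?thesis using sum_bary[OF assms(1-3)] assms(5) by (simp add: face_simplex_def)
qed

lemma lin_ext_eq_bary:
  assumes "finite C" "inj_on g C" "f \<in> face_simplex (g ` C)"
  shows "lin_ext f = bary g C (\<lambda>v. f (g v))"
proof
  fix z
  have "{p. f p \<noteq> 0} \<subseteq> g ` C" using assms(3) by (auto simp: face_simplex_def)
  then have "lin_ext f z = (\<Sum>p\<in>g ` C. f p * p z)"
    unfolding lin_ext_def using assms(1) by (intro sum.mono_neutral_left) auto
  also have "\<dots> = bary g C (\<lambda>v. f (g v)) z"
    by (simp add: bary_def sum.reindex[OF assms(2)])
  finally show "lin_ext f z = bary g C (\<lambda>v. f (g v)) z" .
qed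

lemma bary_in_lin_ext_image:
  assumes "finite C" "inj_on g C" "\<forall>v\<in>C. 0 \<le> m v" "sum m C = 1"
  shows "bary g C m \<in> lin_ext ` face_simplex (g ` C)"
proof -
  define f where "f q = (if q \<in> g ` C then m (the_inv_into C g q) else 0)" for q
  have fg: "f (g v) = m v" if "v \<in> C" for v
    using that the_inv_into_f_f[OF assms(2)] by (simp add: f_def)
  have "sum f (g ` C) = 1"
    using assms(4) by (simp add: sum.reindex[OF assms(2)] fg)
  then have "f \<in> face_simplex (g ` C)"
    using assms(3) fg by (auto simp: face_simplex_def f_def)
  moreover have "bary g C (\<lambda>v. f (g v)) = bary g C m"
    by (rule bary_cong) (simp add: fg)
  ultimately show ?thesis using lin_ext_eq_bary[OF assms(1,2)] by (metis image_eqI)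
qed

lemma lin_ext_face_simplex_image_subset:
  assumes "finite \<sigma>" "finite C" "inj_on g C" "g ` C \<subseteq> face_simplex \<sigma>"
  shows "lin_ext ` face_simplex (g ` C) \<subseteq> face_simplex \<sigma>"
proof
  fix p assume "p \<in> lin_ext ` face_simplex (g ` C)"
  then obtain f where f: "f \<in> face_simplex (g ` C)" "p = lin_ext f" by blast
  then have "sum (\<lambda>v. f (g v)) C = 1"
    using sum.reindex[OF assms(3), of f] by (simp add: face_simplex_def)
  then show "p \<in> face_simplex \<sigma>"
    using f lin_ext_eq_bary[OF assms(2,3)] bary_in_face_simplex[OF assms(1,2,4)]
    by (simp add: face_simplex_def)
qed

lemma face_simplex_image_support:
  assumes K: "simplicial_complex K" and c: "c \<in> K" "inj_on g c" and f: "f \<in> face_simplex (g ` c)"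
  obtains c' where "c' \<in> K" "\<forall>v\<in>c'. 0 < f (g v)" "lin_ext f = bary g c' (\<lambda>v. f (g v))"
    "\<And>q. f q \<noteq> 0 \<longleftrightarrow> q \<in> g ` c'"
proof
  let ?c' = "{v\<in>c. 0 < f (g v)}"
  have fin: "finite c" using simplicial_complex_finite[OF K c(1)] .
  have f0: "\<And>q. 0 \<le> f q" "\<And>q. q \<notin> g ` c \<Longrightarrow> f q = 0" "sum f (g ` c) = 1"
    using f by (auto simp: face_simplex_def)
  show supp: "f q \<noteq> 0 \<longleftrightarrow> q \<in> g ` ?c'" for q
    using f0(1,2)[of q] by (auto simp: order_less_le)
  obtain q where "f q \<noteq> 0" using f0(3) sum.not_neutral_contains_not_neutral[of f "g ` c"] by auto
  then have "?c' \<noteq> {}" using supp by blast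
  then show "?c' \<in> K" by (intro simplicial_complex_subface[OF K c(1)]) auto
  show "\<forall>v\<in>?c'. 0 < f (g v)" by simp
  have "bary g c (\<lambda>v. f (g v)) = bary g ?c' (\<lambda>v. f (g v))"
    unfolding bary_def using fin f0(1) by (intro ext sum.mono_neutral_right) (auto simp: order_less_le)
  then show "lin_ext f = bary g ?c' (\<lambda>v. f (g v))"
    using lin_ext_eq_bary[OF fin c(2) f] by simp
qed

lemma inj_on_lin_ext_realization_image:
  assumes K: "simplicial_complex K" and inj: "inj_on g (\<Union>K)"
    and unique: "\<And>c1 c2 m1 m2. c1 \<in> K \<Longrightarrow> c2 \<in> K \<Longrightarrow> \<forall>v\<in>c1. 0 < m1 v \<Longrightarrow> \<forall>v\<in>c2. 0 < m2 v \<Longrightarrow>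
      bary g c1 m1 = bary g c2 m2 \<Longrightarrow> c1 = c2 \<and> (\<forall>v\<in>c1. m1 v = m2 v)"
  shows "inj_on lin_ext (realization ((`) g ` K))"
proof (rule inj_onI)
  fix f1 f2
  assume "f1 \<in> realization ((`) g ` K)" "f2 \<in> realization ((`) g ` K)" and eq: "lin_ext f1 = lin_ext f2"
  then obtain c1 c2 where c: "c1 \<in> K" "f1 \<in> face_simplex (g ` c1)" "c2 \<in> K" "f2 \<in> face_simplex (g ` c2)"
    by (auto simp: realization_def)
  have "inj_on g c1" "inj_on g c2" using inj c(1,3) by (auto intro: inj_on_subset)
  then obtain d1 d2 where
    d1: "d1 \<in> K" "\<forall>v\<in>d1. 0 < f1 (g v)" "lin_ext f1 = bary g d1 (\<lambda>v. f1 (g v))" "\<And>q. f1 q \<noteq> 0 \<longleftrightarrow> q \<in> g ` d1" and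
    d2: "d2 \<in> K" "\<forall>v\<in>d2. 0 < f2 (g v)" "lin_ext f2 = bary g d2 (\<lambda>v. f2 (g v))" "\<And>q. f2 q \<noteq> 0 \<longleftrightarrow> q \<in> g ` d2"
    using face_simplex_image_support[OF K c(1) _ c(2)] face_simplex_image_support[OF K c(3) _ c(4)]
    by metis
  have d: "d1 = d2" "\<forall>v\<in>d1. f1 (g v) = f2 (g v)"
    using unique[OF d1(1) d2(1) d1(2) d2(2)] eq d1(3) d2(3) by auto
  show "f1 = f2"
  proof
    fix q
    show "f1 q = f2 q"
    proof (cases "q \<in> g ` d1")
      case True
      then show ?thesis using d(2) by blast
    next
      case False
      then show ?thesis using d1(4)[of q] d2(4)[of q] d(1) by auto
    qed
  qed
qed

lemma face_simplex_eq_Union_image: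
  assumes K: "simplicial_complex K" and inj: "inj_on g (\<Union>K)" and \<sigma>: "finite \<sigma>"
    and fin: "finite {v\<in>\<Union>K. g v \<in> face_simplex \<sigma>}"
    and exists: "\<And>p. p \<in> face_simplex \<sigma> \<Longrightarrow>
      \<exists>c\<in>K. \<exists>m. g ` c \<subseteq> face_simplex \<sigma> \<and> (\<forall>v\<in>c. 0 < m v) \<and> bary g c m = p"
  shows "\<exists>F. finite F \<and> F \<subseteq> (`) g ` K \<and> face_simplex \<sigma> = (\<Union>\<tau>\<in>F. lin_ext ` face_simplex \<tau>)"
proof (intro exI conjI)
  let ?C = "{c\<in>K. g ` c \<subseteq> face_simplex \<sigma>}"
  have fin_c: "finite c" and inj_c: "inj_on g c" if "c \<in> K" for c
    using simplicial_complex_finite[OF K that] inj_on_subset[OF inj] that by auto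
  have "?C \<subseteq> Pow {v\<in>\<Union>K. g v \<in> face_simplex \<sigma>}" by blast
  then show "finite ((`) g ` ?C)" using fin by (blast intro: finite_subset)
  show "(`) g ` ?C \<subseteq> (`) g ` K" by blast
  show "face_simplex \<sigma> = (\<Union>\<tau>\<in>(`) g ` ?C. lin_ext ` face_simplex \<tau>)"
  proof
    show "face_simplex \<sigma> \<subseteq> (\<Union>\<tau>\<in>(`) g ` ?C. lin_ext ` face_simplex \<tau>)"
    proof
      fix p assume p: "p \<in> face_simplex \<sigma>"
      then obtain c m where c: "c \<in> K" "g ` c \<subseteq> face_simplex \<sigma>" "\<forall>v\<in>c. 0 < m v" "bary g c m = p"
        using exists by blast
      have "sum m c = 1"
        using sum_bary[OF \<sigma> fin_c[OF c(1)] c(2), of m] p c(4) by (simp add: face_simplex_def)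
      moreover have "\<forall>v\<in>c. 0 \<le> m v" using c(3) by (simp add: less_imp_le)
      ultimately have "p \<in> lin_ext ` face_simplex (g ` c)"
        using bary_in_lin_ext_image[OF fin_c[OF c(1)] inj_c[OF c(1)]] c(4) by blast
      then show "p \<in> (\<Union>\<tau>\<in>(`) g ` ?C. lin_ext ` face_simplex \<tau>)" using c(1,2) by blast
    qed
    show "(\<Union>\<tau>\<in>(`) g ` ?C. lin_ext ` face_simplex \<tau>) \<subseteq> face_simplex \<sigma>"
      using lin_ext_face_simplex_image_subset[OF \<sigma> fin_c inj_c] by blast
  qed
qed

lemma subdivision_imageI:
  assumes K: "simplicial_complex K" and L: "simplicial_complex L" and inj: "inj_on g (\<Union>K)"
    and faces: "\<And>c. c \<in> K \<Longrightarrow> \<exists>\<sigma>\<in>L. g ` c \<subseteq> face_simplex \<sigma>"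
    and fin: "\<And>\<sigma>. \<sigma> \<in> L \<Longrightarrow> finite {v\<in>\<Union>K. g v \<in> face_simplex \<sigma>}"
    and unique: "\<And>c1 c2 m1 m2. c1 \<in> K \<Longrightarrow> c2 \<in> K \<Longrightarrow> \<forall>v\<in>c1. 0 < m1 v \<Longrightarrow> \<forall>v\<in>c2. 0 < m2 v \<Longrightarrow>
      bary g c1 m1 = bary g c2 m2 \<Longrightarrow> c1 = c2 \<and> (\<forall>v\<in>c1. m1 v = m2 v)"
    and exists: "\<And>\<sigma> p. \<sigma> \<in> L \<Longrightarrow> p \<in> face_simplex \<sigma> \<Longrightarrow>
      \<exists>c\<in>K. \<exists>m. g ` c \<subseteq> face_simplex \<sigma> \<and> (\<forall>v\<in>c. 0 < m v) \<and> bary g c m = p"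
  shows "subdivision ((`) g ` K) L"
  unfolding subdivision_def
proof (intro conjI ballI)
  have fin_L: "finite \<sigma>" if "\<sigma> \<in> L" for \<sigma> using simplicial_complex_finite[OF L that] .
  have fin_K: "finite c" and inj_K: "inj_on g c" if "c \<in> K" for c
    using simplicial_complex_finite[OF K that] inj_on_subset[OF inj] that by auto
  show "simplicial_complex ((`) g ` K)" using simplicial_complex_image[OF K] .
  show "\<Union>((`) g ` K) \<subseteq> realization L"
    using faces by (fastforce simp: realization_def)
  show "inj_on lin_ext (realization ((`) g ` K))"
    using inj_on_lin_ext_realization_image[OF K inj unique] .
  show "\<exists>\<sigma>\<in>L. lin_ext ` face_simplex \<tau> \<subseteq> face_simplex \<sigma>" if \<tau>: "\<tau> \<in> (`) g ` K" for \<tau>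
  proof -
    obtain c where c: "c \<in> K" "\<tau> = g ` c" using \<tau> by blast
    obtain \<sigma> where "\<sigma> \<in> L" "g ` c \<subseteq> face_simplex \<sigma>" using faces[OF c(1)] by blast
    then show ?thesis
      using lin_ext_face_simplex_image_subset[OF fin_L fin_K[OF c(1)] inj_K[OF c(1)]] c(2) by blast
  qed
  show "\<exists>F. finite F \<and> F \<subseteq> (`) g ` K \<and> face_simplex \<sigma> = (\<Union>\<tau>\<in>F. lin_ext ` face_simplex \<tau>)"
    if "\<sigma> \<in> L" for \<sigma>
    using face_simplex_eq_Union_image[OF K inj fin_L[OF that] fin[OF that] exists[OF that]] .
qed

lemma inj_barycentre_singleton: "inj (\<lambda>v. barycentre {v})"
proof (rule injI)
  fix u v :: 'v
  assume "barycentre {u} = barycentre {v}"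
  then have "{u} = {v}" by (rule inj_onD[OF inj_on_barycentre]) simp_all
  then show "u = v" by simp
qed

lemma bary_barycentre_singleton:
  "finite C \<Longrightarrow> bary (\<lambda>v. barycentre {v}) C m = (\<lambda>z. if z \<in> C then m z else 0)"
  by (simp add: bary_def barycentre_def fun_eq_iff if_distrib sum.delta cong: if_cong)

lemma bary_barycentre_singleton_unique:
  assumes "finite c1" "finite c2" "\<forall>v\<in>c1. 0 < m1 v" "\<forall>v\<in>c2. 0 < m2 v"
    and "bary (\<lambda>v. barycentre {v}) c1 m1 = bary (\<lambda>v. barycentre {v}) c2 m2"
  shows "c1 = c2 \<and> (\<forall>v\<in>c1. m1 v = m2 v)"
proof -
  have eq: "(if z \<in> c1 then m1 z else 0) = (if z \<in> c2 then m2 z else 0)" for z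
    using fun_cong[OF assms(5), of z] by (simp add: bary_barycentre_singleton assms(1,2))
  have "c1 = c2"
  proof (rule set_eqI)
    show "z \<in> c1 \<longleftrightarrow> z \<in> c2" for z
      using eq[of z] assms(3,4) by (cases "z \<in> c1"; cases "z \<in> c2") auto
  qed
  moreover have "m1 v = m2 v" if "v \<in> c1" for v
    using eq[of v] that \<open>c1 = c2\<close> by simp
  ultimately show ?thesis by blast
qed

lemma face_simplex_bary_barycentre_singleton:
  assumes "finite \<sigma>" "p \<in> face_simplex \<sigma>"
  shows "{v\<in>\<sigma>. 0 < p v} \<noteq> {}" "bary (\<lambda>v. barycentre {v}) {v\<in>\<sigma>. 0 < p v} p = p"
proof -
  have p: "\<And>v. 0 \<le> p v" "\<And>v. v \<notin> \<sigma> \<Longrightarrow> p v = 0" "sum p \<sigma> = 1"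
    using assms(2) by (auto simp: face_simplex_def)
  show "{v\<in>\<sigma>. 0 < p v} \<noteq> {}"
  proof
    assume "{v\<in>\<sigma>. 0 < p v} = {}"
    then have "sum p \<sigma> = 0" using p(1) by (intro sum.neutral) (force simp: order_less_le)
    then show False using p(3) by simp
  qed
  show "bary (\<lambda>v. barycentre {v}) {v\<in>\<sigma>. 0 < p v} p = p"
    using bary_barycentre_singleton[of "{v\<in>\<sigma>. 0 < p v}" p] assms(1) p(1,2)
    by (auto simp: fun_eq_iff order_less_le)
qed

lemma subdivision_vertices:
  assumes K: "simplicial_complex K"
  shows "subdivision ((`) (\<lambda>v. barycentre {v}) ` K) K"
proof (rule subdivision_imageI[OF K K])
  have fin: "finite \<sigma>" if "\<sigma> \<in> K" for \<sigma> using simplicial_complex_finite[OF K that] .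
  have pt: "barycentre {v} \<in> face_simplex \<sigma> \<longleftrightarrow> v \<in> \<sigma>" if "finite \<sigma>" for v \<sigma>
    using barycentre_in_face_simplex_iff[of "{v}" \<sigma>] that by simp
  show "inj_on (\<lambda>v. barycentre {v}) (\<Union>K)"
    using inj_barycentre_singleton by (rule inj_on_subset) simp
  show "\<exists>\<sigma>\<in>K. (\<lambda>v. barycentre {v}) ` c \<subseteq> face_simplex \<sigma>" if "c \<in> K" for c
  proof
    show "(\<lambda>v. barycentre {v}) ` c \<subseteq> face_simplex c" using pt[OF fin[OF that]] by blast
  qed (fact that)
  show "finite {v\<in>\<Union>K. barycentre {v} \<in> face_simplex \<sigma>}" if "\<sigma> \<in> K" for \<sigma>
  proof (rule finite_subset)
    show "{v\<in>\<Union>K. barycentre {v} \<in> face_simplex \<sigma>} \<subseteq> \<sigma>" using pt[OF fin[OF that]] by blast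
  qed (fact fin[OF that])
  show "c1 = c2 \<and> (\<forall>v\<in>c1. m1 v = m2 v)"
    if "c1 \<in> K" "c2 \<in> K" "\<forall>v\<in>c1. 0 < m1 v" "\<forall>v\<in>c2. 0 < m2 v"
      "bary (\<lambda>v. barycentre {v}) c1 m1 = bary (\<lambda>v. barycentre {v}) c2 m2" for c1 c2 m1 m2
    using bary_barycentre_singleton_unique[OF fin[OF that(1)] fin[OF that(2)] that(3-5)] .
  show "\<exists>c\<in>K. \<exists>m. (\<lambda>v. barycentre {v}) ` c \<subseteq> face_simplex \<sigma> \<and> (\<forall>v\<in>c. 0 < m v) \<and>
      bary (\<lambda>v. barycentre {v}) c m = p"
    if \<sigma>: "\<sigma> \<in> K" and p: "p \<in> face_simplex \<sigma>" for \<sigma> p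
  proof (intro bexI exI conjI)
    note support = face_simplex_bary_barycentre_singleton[OF fin[OF \<sigma>] p]
    show "{v\<in>\<sigma>. 0 < p v} \<in> K" using support(1) by (intro simplicial_complex_subface[OF K \<sigma>]) auto
    show "(\<lambda>v. barycentre {v}) ` {v\<in>\<sigma>. 0 < p v} \<subseteq> face_simplex \<sigma>" using pt[OF fin[OF \<sigma>]] by auto
    show "\<forall>v\<in>{v\<in>\<sigma>. 0 < p v}. 0 < p v" by simp
    show "bary (\<lambda>v. barycentre {v}) {v\<in>\<sigma>. 0 < p v} p = p" using support(2) .
  qed
qed

lemma PL_homeomorphic_if_subdivision_image:
  assumes K: "simplicial_complex K" and inj: "inj_on g (\<Union>K)" and sub: "subdivision ((`) g ` K) L"
  shows "PL_homeomorphic K L"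
  unfolding PL_homeomorphic_def
proof (intro exI conjI)
  show "subdivision ((`) (\<lambda>v. barycentre {v}) ` K) K" using subdivision_vertices[OF K] .
  show "subdivision ((`) g ` K) L" using sub .
  show "simplicial_iso ((`) (\<lambda>v. barycentre {v}) ` K) ((`) g ` K)"
    using simplicial_iso_image_image[OF inj_on_subset[OF inj_barycentre_singleton subset_UNIV] inj] .
qed

section \<open>Bier posets\<close>

lemma finite_chain_has_greatest:
  assumes "finite C" "C \<noteq> {}" "is_chain C R"
    and "\<forall>a\<in>C. \<forall>b\<in>C. \<forall>c\<in>C. R a b \<and> R b c \<longrightarrow> R a c"
  shows "\<exists>t\<in>C. \<forall>v\<in>C. R v t"
  using assms
proof (induction C rule: finite_ne_induct)
  case (singleton x)
  then show ?case unfolding is_chain_def by blast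
next
  case (insert x F)
  have "is_chain F R" using insert.prems(1) by (auto simp: is_chain_def)
  moreover have "\<forall>a\<in>F. \<forall>b\<in>F. \<forall>c\<in>F. R a b \<and> R b c \<longrightarrow> R a c" using insert.prems(2) by blast
  ultimately obtain t where t: "t \<in> F" "\<forall>v\<in>F. R v t" using insert.IH by blast
  have "R x x" "R x t \<or> R t x" using insert.prems(1) t(1) by (auto simp: is_chain_def)
  then consider "R x t" | "R t x" "R x x" by blast
  then show ?case
  proof cases
    case 1
    then show ?thesis using t by blast
  next
    case 2
    then have "\<forall>v\<in>F. R v x" using t insert.prems(2) by blast
    then show ?thesis using 2 by blast
  qed
qed

lemma proper_part_bounded:
  assumes "b \<in> Q" "t \<in> Q" "\<forall>x\<in>Q. le b x" "\<forall>x\<in>Q. le x t"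
    and "\<forall>x\<in>Q. \<forall>y\<in>Q. le x y \<and> le y x \<longrightarrow> x = y"
  shows "proper_part Q le = Q - {b, t}"
  using assms unfolding proper_part_def by blast

locale bier =
  fixes P :: "'a set" and le :: "'a \<Rightarrow> 'a \<Rightarrow> bool" and I :: "'a set"
  assumes bounded: "bounded_poset P le" and ideal: "proper_ideal P le I"
begin

lemma poset: "poset_on P le"
  using bounded by (simp add: bounded_poset_def)

lemma P_refl: "x \<in> P \<Longrightarrow> le x x"
  using poset unfolding poset_on_def by blast

lemma P_trans: "x \<in> P \<Longrightarrow> y \<in> P \<Longrightarrow> z \<in> P \<Longrightarrow> le x y \<Longrightarrow> le y z \<Longrightarrow> le x z"
  using poset unfolding poset_on_def by blast

lemma P_antisym: "x \<in> P \<Longrightarrow> y \<in> P \<Longrightarrow> le x y \<Longrightarrow> le y x \<Longrightarrow> x = y"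
  using poset unfolding poset_on_def by blast

definition hat0 :: 'a where "hat0 = (SOME b. b \<in> P \<and> (\<forall>x\<in>P. le b x))"
definition hat1 :: 'a where "hat1 = (SOME t. t \<in> P \<and> (\<forall>x\<in>P. le x t))"

lemma hat0: "hat0 \<in> P" "x \<in> P \<Longrightarrow> le hat0 x"
proof -
  have "\<exists>b. b \<in> P \<and> (\<forall>x\<in>P. le b x)" using bounded by (auto simp: bounded_poset_def)
  then have "hat0 \<in> P \<and> (\<forall>x\<in>P. le hat0 x)" unfolding hat0_def by (rule someI_ex)
  then show "hat0 \<in> P" "x \<in> P \<Longrightarrow> le hat0 x" by auto
qed

lemma hat1: "hat1 \<in> P" "x \<in> P \<Longrightarrow> le x hat1"
proof -
  have "\<exists>t. t \<in> P \<and> (\<forall>x\<in>P. le x t)" using bounded by (auto simp: bounded_poset_def)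
  then have "hat1 \<in> P \<and> (\<forall>x\<in>P. le x hat1)" unfolding hat1_def by (rule someI_ex)
  then show "hat1 \<in> P" "x \<in> P \<Longrightarrow> le x hat1" by auto
qed

lemma I_subset: "I \<subseteq> P"
  using ideal by (simp add: proper_ideal_def)

lemma I_downward: "x \<in> I \<Longrightarrow> y \<in> P \<Longrightarrow> le y x \<Longrightarrow> y \<in> I"
  using ideal by (auto simp: proper_ideal_def)

lemma hat0_in_I: "hat0 \<in> I"
proof -
  obtain x where "x \<in> I" using ideal by (auto simp: proper_ideal_def)
  then show ?thesis using I_downward I_subset hat0 by blast
qed

lemma hat1_notin_I: "hat1 \<notin> I"
proof
  assume "hat1 \<in> I"
  then have "P \<subseteq> I" using I_downward hat1 by blast
  then show False using ideal by (auto simp: proper_ideal_def)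
qed

lemma proper_part_P: "proper_part P le = P - {hat0, hat1}"
  using hat0 hat1 P_antisym by (intro proper_part_bounded) auto

lemma bier_le_antisym:
  assumes "u \<in> bier_carrier P le I" "v \<in> bier_carrier P le I" "bier_le le u v" "bier_le le v u"
  shows "u = v"
proof (cases u)
  case None
  then show ?thesis using assms(3) by (cases v) auto
next
  case (Some p)
  then obtain x y where u: "u = Some (x, y)" "x \<in> P" "y \<in> P"
    using assms(1) I_subset by (auto simp: bier_carrier_def)
  then obtain x' y' where v: "v = Some (x', y')" "x' \<in> P" "y' \<in> P"
    using assms(2,4) I_subset by (cases v) (auto simp: bier_carrier_def)
  show ?thesis using assms(3,4) u v P_antisym by simp
qed

definition proper_interval :: "'a \<Rightarrow> 'a \<Rightarrow> bool" where
  "proper_interval x y \<longleftrightarrow> x \<in> I \<and> y \<in> P \<and> y \<notin> I \<and> le x y \<and> (x, y) \<noteq> (hat0, hat1)"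

abbreviation bier_vertices :: "('a \<times> 'a) option set" where
  "bier_vertices \<equiv> proper_part (bier_carrier P le I) (bier_le le)"

abbreviation bier_complex :: "('a \<times> 'a) option set set" where
  "bier_complex \<equiv> order_complex bier_vertices (bier_le le)"

abbreviation poset_complex :: "'a set set" where
  "poset_complex \<equiv> order_complex (proper_part P le) le"

lemma bier_vertices_eq: "bier_vertices = Some ` {(x, y). proper_interval x y}"
proof -
  have "bier_vertices = bier_carrier P le I - {Some (hat0, hat1), None}"
  proof (rule proper_part_bounded)
    show "Some (hat0, hat1) \<in> bier_carrier P le I"
      using hat0_in_I hat1 hat1_notin_I hat0 by (simp add: bier_carrier_def)
    show "\<forall>v\<in>bier_carrier P le I. bier_le le (Some (hat0, hat1)) v"
      using hat0 hat1 I_subset by (auto simp: bier_carrier_def)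
    show "None \<in> bier_carrier P le I" by (simp add: bier_carrier_def)
    show "\<forall>v\<in>bier_carrier P le I. bier_le le v None" by simp
    show "\<forall>u\<in>bier_carrier P le I. \<forall>v\<in>bier_carrier P le I. bier_le le u v \<and> bier_le le v u \<longrightarrow> u = v"
      using bier_le_antisym by blast
  qed
  then show ?thesis by (auto simp: bier_carrier_def proper_interval_def)
qed

lemma Some_in_bier_vertices_iff [simp]: "Some (x, y) \<in> bier_vertices \<longleftrightarrow> proper_interval x y"
  by (auto simp: bier_vertices_eq)

lemma bier_verticesE:
  assumes "v \<in> bier_vertices"
  obtains x y where "v = Some (x, y)" "proper_interval x y"
  using assms by (auto simp: bier_vertices_eq)

lemma bier_vertices_subset_carrier: "bier_vertices \<subseteq> bier_carrier P le I"
  by (auto simp: proper_part_def)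

lemma proper_intervalD:
  assumes "proper_interval x y"
  shows "x \<in> I" "x \<in> P" "y \<in> P" "y \<notin> I" "le x y" "x \<noteq> hat1" "y \<noteq> hat0"
  using assms I_subset hat0_in_I hat1_notin_I by (auto simp: proper_interval_def)

lemma bier_le_refl: "v \<in> bier_vertices \<Longrightarrow> bier_le le v v"
  by (erule bier_verticesE) (simp add: P_refl proper_intervalD)

lemma bier_le_trans:
  assumes "u \<in> bier_vertices" "v \<in> bier_vertices" "w \<in> bier_vertices"
    and "bier_le le u v" "bier_le le v w"
  shows "bier_le le u w"
proof -
  obtain x1 y1 where 1: "u = Some (x1, y1)" "proper_interval x1 y1" using assms(1) by (rule bier_verticesE)
  obtain x2 y2 where 2: "v = Some (x2, y2)" "proper_interval x2 y2" using assms(2) by (rule bier_verticesE)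
  obtain x3 y3 where 3: "w = Some (x3, y3)" "proper_interval x3 y3" using assms(3) by (rule bier_verticesE)
  show ?thesis
    using assms(4,5) 1 2 3 P_trans[of x1 x2 x3] P_trans[of y3 y2 y1] by (simp add: proper_intervalD)
qed

lemma Union_bier_complex_subset: "\<Union>bier_complex \<subseteq> bier_vertices"
  by (auto simp: order_complex_def)

definition proper_ends :: "('a \<times> 'a) option \<Rightarrow> 'a set" where
  "proper_ends v = (case v of None \<Rightarrow> {} | Some (x, y) \<Rightarrow> {x, y} - {hat0, hat1})"

lemma proper_ends_Some [simp]: "proper_ends (Some (x, y)) = {x, y} - {hat0, hat1}"
  by (simp add: proper_ends_def)

lemma proper_ends_in_I: "proper_interval x y \<Longrightarrow> z \<in> proper_ends (Some (x, y)) \<Longrightarrow> z \<in> I \<Longrightarrow> z = x"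
  using proper_intervalD(4) by auto

lemma proper_ends_notin_I: "proper_interval x y \<Longrightarrow> z \<in> proper_ends (Some (x, y)) \<Longrightarrow> z \<notin> I \<Longrightarrow> z = y"
  using proper_intervalD(1) by auto

lemma lower_in_proper_ends: "proper_interval x y \<Longrightarrow> x \<noteq> hat0 \<Longrightarrow> x \<in> proper_ends (Some (x, y))"
  using proper_intervalD(6) by simp

lemma upper_in_proper_ends: "proper_interval x y \<Longrightarrow> y \<noteq> hat1 \<Longrightarrow> y \<in> proper_ends (Some (x, y))"
  using proper_intervalD(7) by simp

lemma proper_ends_finite: "finite (proper_ends v)"
  by (simp add: proper_ends_def split: option.split)

lemma proper_ends_nonempty: "v \<in> bier_vertices \<Longrightarrow> proper_ends v \<noteq> {}"
  by (erule bier_verticesE) (auto simp: proper_interval_def hat0_in_I hat1_notin_I)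

lemma proper_ends_subset: "v \<in> bier_vertices \<Longrightarrow> proper_ends v \<subseteq> proper_part P le"
  by (erule bier_verticesE) (auto simp: proper_part_P dest: proper_intervalD)

lemma inj_on_proper_ends: "inj_on proper_ends bier_vertices"
proof (rule inj_onI)
  fix u v assume "u \<in> bier_vertices" "v \<in> bier_vertices" and eq: "proper_ends u = proper_ends v"
  then obtain x1 y1 x2 y2 where 1: "u = Some (x1, y1)" "proper_interval x1 y1"
    and 2: "v = Some (x2, y2)" "proper_interval x2 y2"
    by (metis bier_verticesE)
  have "x1 = x2"
    using eq 1 2 lower_in_proper_ends proper_ends_in_I proper_intervalD(1) by metis
  moreover have "y1 = y2"
    using eq 1 2 upper_in_proper_ends proper_ends_notin_I proper_intervalD(4) by metis
  ultimately show "u = v" using 1 2 by simp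
qed

lemma proper_ends_comparable:
  assumes "u \<in> bier_vertices" "v \<in> bier_vertices" "bier_le le u v"
    and "z1 \<in> proper_ends u" "z2 \<in> proper_ends v"
  shows "le z1 z2 \<or> le z2 z1"
proof -
  obtain x1 y1 where 1: "u = Some (x1, y1)" "proper_interval x1 y1" using assms(1) by (rule bier_verticesE)
  obtain x2 y2 where 2: "v = Some (x2, y2)" "proper_interval x2 y2" using assms(2) by (rule bier_verticesE)
  have "le x1 x2" "le x2 y2" "le y2 y1" using assms(3) 1 2 by (auto dest: proper_intervalD)
  moreover have "x1 \<in> P" "x2 \<in> P" "y1 \<in> P" "y2 \<in> P" using 1 2 by (auto dest: proper_intervalD)
  ultimately have "le x1 y2" "le x2 y1" using P_trans by blast+
  then show ?thesis
    using assms(4,5) 1 2 \<open>le x1 x2\<close> \<open>le y2 y1\<close> by auto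
qed

lemma proper_ends_chain:
  assumes "c \<in> bier_complex"
  shows "\<Union>(proper_ends ` c) \<in> poset_complex"
proof -
  have c: "finite c" "c \<noteq> {}" "c \<subseteq> bier_vertices" "is_chain c (bier_le le)"
    using assms by (auto simp: order_complex_def)
  have "is_chain (\<Union>(proper_ends ` c)) le"
    unfolding is_chain_def
  proof (intro ballI)
    fix z1 z2 assume "z1 \<in> \<Union>(proper_ends ` c)" "z2 \<in> \<Union>(proper_ends ` c)"
    then obtain u v where "u \<in> c" "v \<in> c" "z1 \<in> proper_ends u" "z2 \<in> proper_ends v" by blast
    then show "le z1 z2 \<or> le z2 z1"
      using c(3,4) proper_ends_comparable unfolding is_chain_def by (meson subsetD)
  qed
  moreover have "\<Union>(proper_ends ` c) \<noteq> {}" using c(2,3) proper_ends_nonempty by blast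
  ultimately show ?thesis
    using c(1,3) proper_ends_finite proper_ends_subset by (auto simp: order_complex_def)
qed

definition bier_point :: "('a \<times> 'a) option \<Rightarrow> 'a \<Rightarrow> real" where
  "bier_point v = barycentre (proper_ends v)"

lemma bier_point_nonneg: "0 \<le> bier_point v z"
  by (simp add: bier_point_def barycentre_nonneg)

lemma bier_point_nonzero_iff: "bier_point v z \<noteq> 0 \<longleftrightarrow> z \<in> proper_ends v"
  by (simp add: bier_point_def barycentre_nonzero_iff proper_ends_finite)

lemma bier_point_in_face_simplex_iff:
  "v \<in> bier_vertices \<Longrightarrow> finite \<sigma> \<Longrightarrow> bier_point v \<in> face_simplex \<sigma> \<longleftrightarrow> proper_ends v \<subseteq> \<sigma>"
  by (simp add: bier_point_def barycentre_in_face_simplex_iff proper_ends_finite proper_ends_nonempty)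

lemma inj_on_bier_point: "inj_on bier_point bier_vertices"
  unfolding bier_point_def
  using comp_inj_on[OF inj_on_proper_ends inj_on_subset[OF inj_on_barycentre]] proper_ends_finite
  by (auto simp: comp_def)

definition weighted_chain :: "('a \<times> 'a) option set \<Rightarrow> (('a \<times> 'a) option \<Rightarrow> real) \<Rightarrow> bool" where
  "weighted_chain C m \<longleftrightarrow>
     finite C \<and> C \<subseteq> bier_vertices \<and> is_chain C (bier_le le) \<and> (\<forall>v\<in>C. 0 < m v)"

lemma weighted_chainI: "c \<in> bier_complex \<Longrightarrow> \<forall>v\<in>c. 0 < m v \<Longrightarrow> weighted_chain c m"
  by (simp add: weighted_chain_def order_complex_def)

lemma weighted_chain_in_bier_complex: "weighted_chain C m \<Longrightarrow> C \<noteq> {} \<Longrightarrow> C \<in> bier_complex"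
  by (simp add: weighted_chain_def order_complex_def)

lemma weighted_chain_support:
  assumes "weighted_chain C m"
  shows "bary bier_point C m z \<noteq> 0 \<longleftrightarrow> z \<in> \<Union>(proper_ends ` C)"
  using assms bary_nonzero_iff[of C m bier_point] bier_point_nonneg bier_point_nonzero_iff
  by (simp add: weighted_chain_def)

lemma weighted_chain_insert:
  assumes "weighted_chain C m" "t \<in> bier_vertices" "t \<notin> C" "\<forall>v\<in>C. bier_le le v t" "0 < w"
  shows "weighted_chain (insert t C) (m(t := w))"
    "bary bier_point (insert t C) (m(t := w)) z = w * bier_point t z + bary bier_point C m z"
  using assms bier_le_refl[OF assms(2)] bary_insert[OF _ assms(3)]
  by (auto simp: weighted_chain_def is_chain_def)

lemma weighted_chain_subtract_vertex:
  assumes "weighted_chain C m" "w \<le> m t"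
  shows "weighted_chain (if m t = w then C - {t} else C) (m(t := m t - w))"
  using assms by (auto simp: weighted_chain_def is_chain_def)

lemma bier_le_top_of_chain:
  assumes C: "C \<subseteq> bier_vertices" "\<forall>u\<in>C. bier_le le u t" and t: "t \<in> bier_vertices"
    and v: "v \<in> bier_vertices" "proper_ends v \<subseteq> \<Union>(proper_ends ` C)"
  shows "bier_le le v t"
proof -
  obtain x y where xy: "v = Some (x, y)" "proper_interval x y" using v(1) by (rule bier_verticesE)
  obtain a b where ab: "t = Some (a, b)" "proper_interval a b" using t by (rule bier_verticesE)
  have "le x a"
  proof (cases "x = hat0")
    case True
    then show ?thesis using hat0 proper_intervalD(2)[OF ab(2)] by simp
  next
    case False
    then obtain u where u: "u \<in> C" "x \<in> proper_ends u"
      using lower_in_proper_ends[OF xy(2)] v(2) xy(1) by blast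
    obtain x' y' where u': "u = Some (x', y')" "proper_interval x' y'"
      using C(1) u(1) by (meson bier_verticesE subsetD)
    have "x = x'" using proper_ends_in_I[OF u'(2)] u(2) u'(1) proper_intervalD(1)[OF xy(2)] by simp
    then show ?thesis using C(2) u(1) u'(1) ab(1) by auto
  qed
  moreover have "le b y"
  proof (cases "y = hat1")
    case True
    then show ?thesis using hat1 proper_intervalD(3)[OF ab(2)] by simp
  next
    case False
    then obtain u where u: "u \<in> C" "y \<in> proper_ends u"
      using upper_in_proper_ends[OF xy(2)] v(2) xy(1) by blast
    obtain x' y' where u': "u = Some (x', y')" "proper_interval x' y'"
      using C(1) u(1) by (meson bier_verticesE subsetD)
    have "y = y'" using proper_ends_notin_I[OF u'(2)] u(2) u'(1) proper_intervalD(4)[OF xy(2)] by simp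
    then show ?thesis using C(2) u(1) u'(1) ab(1) by auto
  qed
  ultimately show ?thesis using xy(1) ab(1) by simp
qed

lemma weighted_chain_support_empty_iff:
  assumes "weighted_chain C m"
  shows "\<Union>(proper_ends ` C) = {} \<longleftrightarrow> C = {}"
proof
  assume "\<Union>(proper_ends ` C) = {}"
  then have "\<forall>v\<in>C. proper_ends v = {}" by auto
  then show "C = {}" using assms proper_ends_nonempty unfolding weighted_chain_def by blast
qed simp

lemma weighted_chain_support_eq:
  assumes "weighted_chain C1 m1" "weighted_chain C2 m2"
    and "bary bier_point C1 m1 = bary bier_point C2 m2"
  shows "\<Union>(proper_ends ` C1) = \<Union>(proper_ends ` C2)"
proof (rule set_eqI)
  fix z show "z \<in> \<Union>(proper_ends ` C1) \<longleftrightarrow> z \<in> \<Union>(proper_ends ` C2)"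
    using weighted_chain_support[OF assms(1), of z] weighted_chain_support[OF assms(2), of z] assms(3)
    by simp
qed

lemma weighted_chains_common_vertex:
  assumes "weighted_chain C1 m1" "weighted_chain C2 m2" "C1 \<noteq> {}"
    and supp: "\<Union>(proper_ends ` C1) = \<Union>(proper_ends ` C2)"
  obtains t where "t \<in> C1" "t \<in> C2"
proof -
  have C: "finite C1" "C1 \<subseteq> bier_vertices" "is_chain C1 (bier_le le)"
    "finite C2" "C2 \<subseteq> bier_vertices" "is_chain C2 (bier_le le)"
    using assms(1,2) by (auto simp: weighted_chain_def)
  have "\<Union>(proper_ends ` C2) \<noteq> {}"
    using weighted_chain_support_empty_iff[OF assms(1)] assms(3) supp by simp
  then have "C2 \<noteq> {}" by auto
  have trans: "\<forall>a\<in>C. \<forall>b\<in>C. \<forall>c\<in>C. bier_le le a b \<and> bier_le le b c \<longrightarrow> bier_le le a c"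
    if "C \<subseteq> bier_vertices" for C
    using bier_le_trans that by blast
  obtain t1 where t1: "t1 \<in> C1" "\<forall>v\<in>C1. bier_le le v t1"
    using finite_chain_has_greatest[OF C(1) assms(3) C(3) trans[OF C(2)]] by blast
  obtain t2 where t2: "t2 \<in> C2" "\<forall>v\<in>C2. bier_le le v t2"
    using finite_chain_has_greatest[OF C(4) \<open>C2 \<noteq> {}\<close> C(6) trans[OF C(5)]] by blast
  have t12: "t1 \<in> bier_vertices" "t2 \<in> bier_vertices" using t1(1) t2(1) C(2,5) by blast+
  have "bier_le le t1 t2"
    by (rule bier_le_top_of_chain[OF C(5) t2(2) t12(2) t12(1)]) (use t1(1) supp in blast)
  moreover have "bier_le le t2 t1"
    by (rule bier_le_top_of_chain[OF C(2) t1(2) t12(1) t12(2)]) (use t2(1) supp in blast)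
  ultimately have "t1 = t2"
    using bier_le_antisym t12 bier_vertices_subset_carrier by blast
  then show ?thesis using that t1(1) t2(1) by blast
qed

lemma weighted_chains_subtract_common_vertex:
  assumes wc: "weighted_chain C1 m1" "weighted_chain C2 m2" and t: "t \<in> C1" "t \<in> C2"
    and eq: "bary bier_point C1 m1 = bary bier_point C2 m2"
  defines "w \<equiv> min (m1 t) (m2 t)"
  defines "C1' \<equiv> if m1 t = w then C1 - {t} else C1" and "C2' \<equiv> if m2 t = w then C2 - {t} else C2"
  defines "m1' \<equiv> m1(t := m1 t - w)" and "m2' \<equiv> m2(t := m2 t - w)"
  shows "weighted_chain C1' m1'" "weighted_chain C2' m2'"
    "bary bier_point C1' m1' = bary bier_point C2' m2'" "card C1' + card C2' < card C1 + card C2"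
proof -
  have fin: "finite C1" "finite C2" using wc by (simp_all add: weighted_chain_def)
  show "weighted_chain C1' m1'" "weighted_chain C2' m2'"
    unfolding C1'_def C2'_def m1'_def m2'_def
    by (rule weighted_chain_subtract_vertex[OF wc(1)] weighted_chain_subtract_vertex[OF wc(2)];
        simp add: w_def)+
  show "bary bier_point C1' m1' = bary bier_point C2' m2'"
  proof
    fix z
    have "w * bier_point t z + bary bier_point C1' m1' z = w * bier_point t z + bary bier_point C2' m2' z"
      using bary_subtract_vertex[OF fin(1) t(1), of bier_point m1 z w]
        bary_subtract_vertex[OF fin(2) t(2), of bier_point m2 z w] eq
      by (simp add: C1'_def C2'_def m1'_def m2'_def)
    then show "bary bier_point C1' m1' z = bary bier_point C2' m2' z" by simp
  qed
  have "card C1' \<le> card C1" "card C2' \<le> card C2"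
    using fin by (simp_all add: C1'_def C2'_def card_Diff1_le)
  moreover have "0 < card C1" "0 < card C2" using fin t by (auto simp: card_gt_0_iff)
  then have "card C1' < card C1 \<or> card C2' < card C2"
    using fin t by (auto simp: C1'_def C2'_def w_def min_def)
  ultimately show "card C1' + card C2' < card C1 + card C2" by linarith
qed

lemma weighted_chain_unique:
  assumes "weighted_chain C1 m1" "weighted_chain C2 m2"
    and "bary bier_point C1 m1 = bary bier_point C2 m2"
  shows "C1 = C2 \<and> (\<forall>v\<in>C1. m1 v = m2 v)"
  using assms
proof (induction "card C1 + card C2" arbitrary: C1 C2 m1 m2 rule: less_induct)
  case less
  note wc = less.prems(1,2) and eq = less.prems(3)
  have supp: "\<Union>(proper_ends ` C1) = \<Union>(proper_ends ` C2)"
    using weighted_chain_support_eq[OF wc eq] .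
  show ?case
  proof (cases "C1 = {}")
    case True
    then show ?thesis
      using supp weighted_chain_support_empty_iff[OF wc(1)] weighted_chain_support_empty_iff[OF wc(2)]
      by simp
  next
    case False
    obtain t where t: "t \<in> C1" "t \<in> C2" using weighted_chains_common_vertex[OF wc False supp] .
    define w where "w = min (m1 t) (m2 t)"
    note peeled = weighted_chains_subtract_common_vertex[OF wc t eq, folded w_def]
    have IH: "(if m1 t = w then C1 - {t} else C1) = (if m2 t = w then C2 - {t} else C2)"
      "\<forall>v\<in>(if m1 t = w then C1 - {t} else C1). (m1(t := m1 t - w)) v = (m2(t := m2 t - w)) v"
      using less.hyps[OF peeled(4) peeled(1-3)] by blast+
    have "m1 t = w" "m2 t = w"
      using IH(1) t by (auto simp: w_def min_def split: if_splits)
    then have "C1 = C2" using IH(1) t by auto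
    moreover have "m1 v = m2 v" if "v \<in> C1" for v
      using IH(2) that \<open>m1 t = w\<close> \<open>m2 t = w\<close> by (cases "v = t") auto
    ultimately show ?thesis by blast
  qed
qed

lemma ideal_cut_of_chain:
  assumes "finite Z" "Z \<subseteq> P" "is_chain Z le"
  obtains a b where "a \<in> insert hat0 (Z \<inter> I)" "\<forall>z\<in>insert hat0 (Z \<inter> I). le z a"
    "b \<in> insert hat1 (Z - I)" "\<forall>z\<in>insert hat1 (Z - I). le b z"
proof -
  let ?A = "insert hat0 (Z \<inter> I)" and ?B = "insert hat1 (Z - I)"
  have "is_chain ?A le" "is_chain ?B (\<lambda>x y. le y x)"
    using assms(2,3) hat0 hat1 unfolding is_chain_def by blast+
  moreover have "\<forall>a\<in>?A. \<forall>b\<in>?A. \<forall>c\<in>?A. le a b \<and> le b c \<longrightarrow> le a c"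
    "\<forall>a\<in>?B. \<forall>b\<in>?B. \<forall>c\<in>?B. le b a \<and> le c b \<longrightarrow> le c a"
    using P_trans assms(2) hat0(1) hat1(1) by blast+
  ultimately show ?thesis
    using that finite_chain_has_greatest[of ?A le] finite_chain_has_greatest[of ?B "\<lambda>x y. le y x"]
      assms(1) by blast
qed

lemma greatest_vertex_within:
  assumes Z: "finite Z" "Z \<noteq> {}" "Z \<subseteq> proper_part P le" "is_chain Z le"
  obtains t where "t \<in> bier_vertices" "proper_ends t \<subseteq> Z"
    "\<And>v. v \<in> bier_vertices \<Longrightarrow> proper_ends v \<subseteq> Z \<Longrightarrow> bier_le le v t"
proof -
  have ZP: "Z \<subseteq> P" "hat0 \<notin> Z" "hat1 \<notin> Z" using Z(3) proper_part_P by auto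
  obtain a b where a: "a \<in> insert hat0 (Z \<inter> I)" "\<forall>z\<in>insert hat0 (Z \<inter> I). le z a"
    and b: "b \<in> insert hat1 (Z - I)" "\<forall>z\<in>insert hat1 (Z - I). le b z"
    using ideal_cut_of_chain[OF Z(1) ZP(1) Z(4)] by blast
  have ab: "a \<in> I" "b \<in> P" "b \<notin> I" "a \<in> P"
    using a(1) b(1) hat0_in_I hat1 hat1_notin_I ZP(1) I_subset by auto
  have "le a b"
  proof (cases "a = hat0 \<or> b = hat1")
    case True
    then show ?thesis using ab hat0 hat1 by auto
  next
    case False
    then have "le a b \<or> le b a" using a(1) b(1) Z(4) unfolding is_chain_def by auto
    then show ?thesis using I_downward ab by blast
  qed
  moreover have "(a, b) \<noteq> (hat0, hat1)"
  proof
    assume "(a, b) = (hat0, hat1)"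
    obtain z where z: "z \<in> Z" using Z(2) by blast
    then have "le z hat0 \<or> le hat1 z" using a(2) b(2) \<open>(a, b) = (hat0, hat1)\<close> by auto
    then show False using z ZP hat0 hat1 P_antisym by blast
  qed
  ultimately have t: "Some (a, b) \<in> bier_vertices" using ab by (simp add: proper_interval_def)
  show ?thesis
  proof (rule that[OF t])
    show "proper_ends (Some (a, b)) \<subseteq> Z" using a(1) b(1) by auto
    show "bier_le le v (Some (a, b))" if v: "v \<in> bier_vertices" "proper_ends v \<subseteq> Z" for v
    proof -
      obtain x y where xy: "v = Some (x, y)" "proper_interval x y" using v(1) by (rule bier_verticesE)
      have "x \<in> insert hat0 (Z \<inter> I)" "y \<in> insert hat1 (Z - I)"
        using v(2) xy lower_in_proper_ends upper_in_proper_ends proper_intervalD(1,4) by blast+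
      then have "le x a" "le b y" using a(2) b(2) by blast+
      then show ?thesis using xy(1) by simp
    qed
  qed
qed

lemma weighted_chain_exists:
  assumes S: "finite S" "S \<subseteq> proper_part P le" "is_chain S le"
    and "\<forall>z. 0 \<le> p z" "\<forall>z. z \<notin> S \<longrightarrow> p z = 0"
  shows "\<exists>C m. weighted_chain C m \<and> bary bier_point C m = p"
  using assms(4,5)
proof (induction "card {z\<in>S. p z \<noteq> 0}" arbitrary: p rule: less_induct)
  case less
  let ?Z = "{z\<in>S. p z \<noteq> 0}"
  show ?case
  proof (cases "?Z = {}")
    case True
    then have "p = (\<lambda>z. 0)" using less.prems(2) by auto
    then show ?thesis by (intro exI[of _ "{}"]) (simp add: weighted_chain_def is_chain_def)
  next
    case False
    have Z: "finite ?Z" "?Z \<subseteq> proper_part P le" "is_chain ?Z le"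
      using S unfolding is_chain_def by auto
    obtain t where t: "t \<in> bier_vertices" "proper_ends t \<subseteq> ?Z"
      "\<And>v. v \<in> bier_vertices \<Longrightarrow> proper_ends v \<subseteq> ?Z \<Longrightarrow> bier_le le v t"
      using greatest_vertex_within[OF Z(1) False Z(2,3)] by blast
    have "\<forall>z\<in>proper_ends t. 0 < p z" using t(2) less.prems(1) by (force simp: order_less_le)
    then obtain w where w: "0 < w" "\<And>z. 0 \<le> p z - w * bier_point t z"
      "\<exists>z\<in>proper_ends t. p z = w * bier_point t z"
      using max_barycentre_multiple_below[OF proper_ends_finite proper_ends_nonempty[OF t(1)]]
        less.prems(1) unfolding bier_point_def by metis
    define p' where "p' z = p z - w * bier_point t z" for z
    have p'_zero: "p' z = 0" if "z \<notin> ?Z" for z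
      using that t(2) less.prems(2) bier_point_nonzero_iff[of t z] by (auto simp: p'_def)
    obtain z0 where z0: "z0 \<in> proper_ends t" "p' z0 = 0" using w(3) by (auto simp: p'_def)
    have "{z\<in>S. p' z \<noteq> 0} \<subset> ?Z" using p'_zero z0 t(2) by blast
    then have "card {z\<in>S. p' z \<noteq> 0} < card ?Z" by (rule psubset_card_mono[OF Z(1)])
    then obtain C m where C: "weighted_chain C m" "bary bier_point C m = p'"
      using less.hyps[of p'] w(2) p'_zero by (auto simp: p'_def)
    have supp: "\<Union>(proper_ends ` C) \<subseteq> ?Z"
      using weighted_chain_support[OF C(1)] C(2) p'_zero by blast
    have "\<forall>v\<in>C. bier_le le v t" using t(3) supp C(1) by (auto simp: weighted_chain_def)
    moreover have "t \<notin> C" using z0 weighted_chain_support[OF C(1), of z0] C(2) by auto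
    ultimately show ?thesis
      using weighted_chain_insert[OF C(1) t(1) _ _ w(1)] C(2) by (auto simp: p'_def fun_eq_iff)
  qed
qed

lemma finite_bier_vertices_within: "finite \<sigma> \<Longrightarrow> finite {v\<in>bier_vertices. proper_ends v \<subseteq> \<sigma>}"
proof (rule finite_subset)
  show "{v\<in>bier_vertices. proper_ends v \<subseteq> \<sigma>} \<subseteq> Some ` (insert hat0 \<sigma> \<times> insert hat1 \<sigma>)"
  proof
    fix v assume "v \<in> {v\<in>bier_vertices. proper_ends v \<subseteq> \<sigma>}"
    then have v: "v \<in> bier_vertices" "proper_ends v \<subseteq> \<sigma>" by simp_all
    then obtain x y where xy: "v = Some (x, y)" "proper_interval x y" by (meson bier_verticesE)
    then have "x \<in> insert hat0 \<sigma>" "y \<in> insert hat1 \<sigma>"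
      using v(2) lower_in_proper_ends upper_in_proper_ends by blast+
    then show "v \<in> Some ` (insert hat0 \<sigma> \<times> insert hat1 \<sigma>)" using xy(1) by blast
  qed
qed simp

lemma face_simplex_weighted_chain:
  assumes \<sigma>: "\<sigma> \<in> poset_complex" and p: "p \<in> face_simplex \<sigma>"
  obtains C m where "weighted_chain C m" "C \<noteq> {}" "\<forall>v\<in>C. proper_ends v \<subseteq> \<sigma>" "bary bier_point C m = p"
proof -
  have \<sigma>': "finite \<sigma>" "\<sigma> \<subseteq> proper_part P le" "is_chain \<sigma> le" using \<sigma> by (auto simp: order_complex_def)
  have p': "\<forall>z. 0 \<le> p z" "\<forall>z. z \<notin> \<sigma> \<longrightarrow> p z = 0" "sum p \<sigma> = 1" using p by (auto simp: face_simplex_def)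
  obtain C m where C: "weighted_chain C m" "bary bier_point C m = p"
    using weighted_chain_exists[OF \<sigma>' p'(1,2)] by blast
  moreover have "C \<noteq> {}" using C(2) p'(3) by auto
  moreover have "\<forall>v\<in>C. proper_ends v \<subseteq> \<sigma>"
    using weighted_chain_support[OF C(1)] C(2) p'(2) by blast
  ultimately show ?thesis using that by blast
qed

lemma subdivision_bier_point:
  "subdivision ((`) bier_point ` bier_complex) poset_complex"
proof (rule subdivision_imageI[OF simplicial_complex_order_complex simplicial_complex_order_complex])
  have in_face: "bier_point ` C \<subseteq> face_simplex \<sigma>"
    if "C \<subseteq> bier_vertices" "finite \<sigma>" "\<forall>v\<in>C. proper_ends v \<subseteq> \<sigma>" for C \<sigma>
    using that bier_point_in_face_simplex_iff by blast
  show "inj_on bier_point (\<Union>bier_complex)"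
    using inj_on_subset[OF inj_on_bier_point Union_bier_complex_subset] .
  show "\<exists>\<sigma>\<in>poset_complex. bier_point ` c \<subseteq> face_simplex \<sigma>"
    if c: "c \<in> bier_complex" for c
  proof
    show \<sigma>: "\<Union>(proper_ends ` c) \<in> poset_complex" using proper_ends_chain[OF c] .
    show "bier_point ` c \<subseteq> face_simplex (\<Union>(proper_ends ` c))"
      using \<sigma> c by (intro in_face) (auto simp: order_complex_def)
  qed
  show "finite {v \<in> \<Union>bier_complex. bier_point v \<in> face_simplex \<sigma>}"
    if "\<sigma> \<in> poset_complex" for \<sigma>
  proof (rule finite_subset[OF _ finite_bier_vertices_within])
    show "finite \<sigma>" using that by (simp add: order_complex_def)
    then show "{v \<in> \<Union>bier_complex. bier_point v \<in> face_simplex \<sigma>}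
      \<subseteq> {v\<in>bier_vertices. proper_ends v \<subseteq> \<sigma>}"
      using Union_bier_complex_subset bier_point_in_face_simplex_iff by blast
  qed
  show "c1 = c2 \<and> (\<forall>v\<in>c1. m1 v = m2 v)"
    if "c1 \<in> bier_complex" "c2 \<in> bier_complex"
      "\<forall>v\<in>c1. 0 < m1 v" "\<forall>v\<in>c2. 0 < m2 v" "bary bier_point c1 m1 = bary bier_point c2 m2"
    for c1 c2 m1 m2
    using weighted_chain_unique[OF weighted_chainI weighted_chainI] that by blast
  show "\<exists>c\<in>bier_complex. \<exists>m.
      bier_point ` c \<subseteq> face_simplex \<sigma> \<and> (\<forall>v\<in>c. 0 < m v) \<and> bary bier_point c m = p"
    if \<sigma>: "\<sigma> \<in> poset_complex" and p: "p \<in> face_simplex \<sigma>" for \<sigma> p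
  proof -
    obtain C m where C: "weighted_chain C m" "C \<noteq> {}" "\<forall>v\<in>C. proper_ends v \<subseteq> \<sigma>"
      "bary bier_point C m = p"
      using face_simplex_weighted_chain[OF \<sigma> p] .
    have "bier_point ` C \<subseteq> face_simplex \<sigma>"
      using C \<sigma> by (intro in_face) (auto simp: weighted_chain_def order_complex_def)
    moreover have "C \<in> bier_complex" using weighted_chain_in_bier_complex[OF C(1,2)] .
    ultimately show ?thesis using C(1,4) unfolding weighted_chain_def by blast
  qed
qed

theorem PL_homeomorphic_bier:
  "PL_homeomorphic bier_complex poset_complex"
proof (rule PL_homeomorphic_if_subdivision_image[OF simplicial_complex_order_complex _ subdivision_bier_point])
  show "inj_on bier_point (\<Union>bier_complex)"
    using inj_on_subset[OF inj_on_bier_point Union_bier_complex_subset] .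
qed

end

theorem corollary3:
  fixes P :: "'a set" and le :: "'a \<Rightarrow> 'a \<Rightarrow> bool" and I :: "'a set"
  assumes "bounded_poset P le"
    and "finite_length P le"
    and "proper_ideal P le I"
  shows "PL_homeomorphic
           (order_complex (proper_part (bier_carrier P le I) (bier_le le)) (bier_le le))
           (order_complex (proper_part P le) le)"
proof -
  interpret bier P le I using assms(1,3) by unfold_locales
  show ?thesis by (rule PL_homeomorphic_bier)
qed

end
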